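(* Assume $c_i=c>0$, $\gamma_i=\gamma>0$, $\nu_i=\nu>0$, $\rho_i=\rho\in(-1,1)$ for all $i$. Let $f^0$ denote $f$ with $\gamma_{\rm P}$ replaced by $0$. Then $f^0$ has a unique maximiser, it is symmetric with common values $z^0_{s,n}$ (all $z^{S,i}$), $z^0_{d,n}$ (all diagonal $z^{Q,i,i}$), $z^0_{o,n}$ (all off-diagonal $z^{Q,i,j}$, $n\ge2$), these are the limits as $\gamma_{\rm P}\downarrow0$ of the corresponding values of the maximiser of $f$, and $$z^0_{s,n}=-\frac{\sqrt n}{\sigma}\frac{\rho}{Ac\nu}\frac{1}{n-\eta_n},\quad z^0_{o,n}=\frac{\rho^2}{Ac\nu^2}\frac{1}{n-\eta_n}\ (n\ge2),\quad z^0_{d,n}=\frac{1}{Ac\nu^2}\Big(1+\frac{\gamma\rho^2/A}{n-\eta_n}\Big),$$ where $A=\gamma+\frac{1}{c\nu^2}$ and $\eta_n=\rho^2\big((n-1)+\frac{\gamma}{A}\big)\in[0,n)$. Moreover, with all other parameters held fixed and $\nu^\dagger_{n,\rho}=\sqrt{\frac{n(1-\rho^2)+\rho^2}{\gamma cn(1-\rho^2)}}$: $|z^0_{s,n}|$ is increasing in $|\rho|$ and decreasing in $c$; $|z^0_{s,n}|$ is increasing in $\nu$ on $(0,\nu^\dagger_{n,\rho}]$ and decreasing on $[\nu^\dagger_{n,\rho},\infty)$; $z^0_{o,n}$ (for $n\ge2$) increases with $|\rho|$ and decreases with $c$ and with $\nu$; $z^0_{d,n}$ increases with $|\rho|$ and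 decreases with $c$ and with $\nu$.
   Context: Fix an integer $n\ge1$ and parameters $\sigma>0$, $\gamma_{\rm P}>0$, and for each $i\in\{1,\dots,n\}$: $c_i>0$, $\gamma_i>0$, $\nu_i>0$, $\rho_i\in(-1,1)$. Write $\nu=(\nu_1,\dots,\nu_n)^\top$, $\rho=(\rho_1,\dots,\rho_n)^\top$. The variables are a matrix $z^Q=(z^{Q,i,j})_{i,j}\in\mathbb{R}^{n\times n}$ ($i$ row, $j$ column) and a vector $z^S=(z^{S,1},\dots,z^{S,n})^\top\in\mathbb{R}^n$. Define $f:\mathbb{R}^{n\times n}\times\mathbb{R}^n\to\mathbb{R}$ by $$f(z^Q,z^S)=-\frac1n\sum_{i=1}^n\Big(\frac{(z^{Q,i,i})^2}{2c_i}+\frac{\gamma_i}{2}\sum_{j=1}^n\nu_j^2(z^{Q,i,j})^2+\frac{\gamma_i\sigma^2}{2}(z^{S,i})^2+\frac{\gamma_i\sigma}{\sqrt n}z^{S,i}\sum_{j=1}^n\rho_j\nu_jz^{Q,i,j}-\frac{z^{Q,i,i}}{c_i}\Big)-\frac{\gamma_{\rm P}}{2n^2}\sum_{i=1}^n\Big(\Big(\nu_i-\nu_i\sum_{j=1}^nz^{Q,j,i}-\frac{\rho_i\sigma}{\sqrt n}\sum_{j=1}^nz^{S,j}\Big)^2+\frac{(1-\rho_i^2)\sigma^2}{n}\Big(\sum_{j=1}^nz^{S,j}\Big)^2\Big).$$ $f$ has a unique global maximiser $(z^{Q,\star},z^{S,\star})$. *)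

theory Defs
  imports "HOL-Analysis.Analysis"
begin

text \<open>Indices range over the finite type 'n, so n = CARD('n).
  zQ $ i $ j is z^{Q,i,j} (row i, column j), zS $ i is z^{S,i}.\<close>

definition fobj :: "real \<Rightarrow> real \<Rightarrow> ('n::finite \<Rightarrow> real) \<Rightarrow> ('n \<Rightarrow> real) \<Rightarrow> ('n \<Rightarrow> real)
    \<Rightarrow> ('n \<Rightarrow> real) \<Rightarrow> real^'n^'n \<Rightarrow> real^'n \<Rightarrow> real" where
  "fobj \<sigma> \<gamma>P c gam nu rho zQ zS =
     (let N = real CARD('n) in
      - (1 / N) * (\<Sum>i\<in>UNIV.
            (zQ$i$i)^2 / (2 * c i)
          + gam i / 2 * (\<Sum>j\<in>UNIV. (nu j)^2 * (zQ$i$j)^2)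
          + gam i * \<sigma>^2 / 2 * (zS$i)^2
          + gam i * \<sigma> / sqrt N * zS$i * (\<Sum>j\<in>UNIV. rho j * nu j * zQ$i$j)
          - zQ$i$i / c i)
      - \<gamma>P / (2 * N^2) * (\<Sum>i\<in>UNIV.
            (nu i - nu i * (\<Sum>j\<in>UNIV. zQ$j$i) - rho i * \<sigma> / sqrt N * (\<Sum>j\<in>UNIV. zS$j))^2
          + (1 - (rho i)^2) * \<sigma>^2 / N * (\<Sum>j\<in>UNIV. zS$j)^2))"

definition is_maximiser :: "(real^'n^'n \<Rightarrow> real^'n \<Rightarrow> real) \<Rightarrow> real^'n^'n \<Rightarrow> real^'n \<Rightarrow> bool" where
  "is_maximiser F zQ zS \<longleftrightarrow> (\<forall>wQ wS. F wQ wS \<le> F zQ zS)"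

definition A_const :: "real \<Rightarrow> real \<Rightarrow> real \<Rightarrow> real" where
  "A_const gam c nu = gam + 1 / (c * nu^2)"

definition eta :: "real \<Rightarrow> real \<Rightarrow> real \<Rightarrow> real \<Rightarrow> real \<Rightarrow> real" where
  "eta n gam c nu rho = rho^2 * ((n - 1) + gam / A_const gam c nu)"

definition z0s :: "real \<Rightarrow> real \<Rightarrow> real \<Rightarrow> real \<Rightarrow> real \<Rightarrow> real \<Rightarrow> real" where
  "z0s n \<sigma> c gam nu rho =
     - (sqrt n / \<sigma>) * (rho / (A_const gam c nu * c * nu)) * (1 / (n - eta n gam c nu rho))"

definition z0o :: "real \<Rightarrow> real \<Rightarrow> real \<Rightarrow> real \<Rightarrow> real \<Rightarrow> real" where
  "z0o n c gam nu rho =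
     (rho^2 / (A_const gam c nu * c * nu^2)) * (1 / (n - eta n gam c nu rho))"

definition z0d :: "real \<Rightarrow> real \<Rightarrow> real \<Rightarrow> real \<Rightarrow> real \<Rightarrow> real" where
  "z0d n c gam nu rho =
     (1 / (A_const gam c nu * c * nu^2))
       * (1 + (gam * rho^2 / A_const gam c nu) / (n - eta n gam c nu rho))"

definition nu_dagger :: "real \<Rightarrow> real \<Rightarrow> real \<Rightarrow> real \<Rightarrow> real" where
  "nu_dagger n c gam rho = sqrt ((n * (1 - rho^2) + rho^2) / (gam * c * n * (1 - rho^2)))"

end

theory Submission
  imports Defs
begin

(* Without the penalty the objective splits into a sum over the rows i of strictly concave
   quadratics in (z^{Q,i,.}, z^{S,i}).  The symmetric point built from z0d, z0o, z0s satisfies the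
   first-order conditions of every row, so the deficit of a row from it is its quadratic part,
   which Cauchy-Schwarz and AM-GM bound below by (1-|rho|) gam/2 (nu^2 |w|^2 + sigma^2 u^2):
   hence the maximiser is unique.  For gamma_P > 0 a nonnegative penalty is subtracted, so a
   maximiser Z of f satisfies f^0(z0) - f^0(Z) <= gamma_P P(z0), and |Z - z0|^2 = O(gamma_P).
   With D = (1 + gam c nu^2)(n - eta_n) = n(1-rho^2) + rho^2 + gam c nu^2 n(1-rho^2) the closed
   forms read rho^2/D, (n(1-rho^2)+rho^2)/D and -(sqrt n/sigma) rho nu/D, and the comparative
   statics are elementary; in nu, |z0s| is a multiple of nu/(m + L nu^2), which peaks at
   nu = sqrt(m/L) = nu_dagger. *)

section \<open>Closed forms\<close>

definition z0_denom :: "real \<Rightarrow> real \<Rightarrow> real \<Rightarrow> real \<Rightarrow> real \<Rightarrow> real" where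
  "z0_denom n c gam nu rho = n*(1 - rho^2) + rho^2 + gam*c*nu^2*n*(1 - rho^2)"

lemma z0_denom_pos:
  assumes "1 \<le> n" "0 < c" "0 < gam" "rho^2 < 1"
  shows "0 < z0_denom n c gam nu rho"
proof -
  have "0 < n*(1 - rho^2) + rho^2" and "0 \<le> gam*c*nu^2*n*(1 - rho^2)"
    using assms by (simp_all add: add_pos_nonneg)
  then show ?thesis
    unfolding z0_denom_def by (rule add_pos_nonneg)
qed

lemma A_const_mult_c_nu2:
  assumes "0 < c" "0 < nu"
  shows "A_const gam c nu * c * nu^2 = 1 + gam*c*nu^2"
  using assms unfolding A_const_def by (simp add: field_simps)

lemma n_minus_eta:
  assumes "0 < c" "0 < gam" "0 < nu"
  shows "n - eta n gam c nu rho = z0_denom n c gam nu rho / (1 + gam*c*nu^2)"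
proof -
  define s where "s = gam*c*nu^2"
  have s: "0 < s" unfolding s_def using assms by simp
  have A: "gam / A_const gam c nu = s / (1 + s)"
    using assms unfolding A_const_def s_def by (simp add: field_simps)
  show ?thesis
    using s unfolding eta_def A z0_denom_def s_def[symmetric] by (simp add: field_simps)
qed

lemma eta_bounds:
  assumes "1 \<le> n" "0 < c" "0 < gam" "0 < nu" "rho^2 < 1"
  shows "0 \<le> eta n gam c nu rho" and "eta n gam c nu rho < n"
proof -
  have "0 < A_const gam c nu"
    using assms unfolding A_const_def by (intro add_pos_pos) auto
  then show "0 \<le> eta n gam c nu rho"
    using assms unfolding eta_def by simp
  have "0 < z0_denom n c gam nu rho / (1 + gam*c*nu^2)"
    using z0_denom_pos[OF assms(1,2,3,5)] assms by (simp add: add_pos_pos)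
  then show "eta n gam c nu rho < n"
    using n_minus_eta[OF assms(2-4), of n rho] by linarith
qed

lemma z0o_eq:
  assumes "0 < c" "0 < gam" "0 < nu"
  shows "z0o n c gam nu rho = rho^2 / z0_denom n c gam nu rho"
proof -
  have "0 < 1 + gam*c*nu^2" using assms by (simp add: add_pos_pos)
  then show ?thesis
    unfolding z0o_def A_const_mult_c_nu2[OF assms(1,3)] n_minus_eta[OF assms] by simp
qed

lemma z0d_eq:
  assumes "1 \<le> n" "0 < c" "0 < gam" "0 < nu" "rho^2 < 1"
  shows "z0d n c gam nu rho = (n*(1 - rho^2) + rho^2) / z0_denom n c gam nu rho"
proof -
  define s where "s = gam*c*nu^2"
  define D where "D = z0_denom n c gam nu rho"
  have s: "0 < s" unfolding s_def using assms by simp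
  have D: "0 < D" unfolding D_def using z0_denom_pos assms by blast
  have A: "gam / A_const gam c nu = s / (1 + s)"
    using assms unfolding A_const_def s_def by (simp add: field_simps)
  have "z0d n c gam nu rho = 1 / (1 + s) * (1 + s * rho^2 / D)"
    using s unfolding z0d_def A_const_mult_c_nu2[OF assms(2,4)] n_minus_eta[OF assms(2-4)]
      times_divide_eq_left[symmetric] A s_def[symmetric] D_def[symmetric]
    by simp
  also have "\<dots> = (D + s * rho^2) / ((1 + s) * D)"
    using s D by (simp add: field_simps)
  also have "D + s * rho^2 = (1 + s) * (n*(1 - rho^2) + rho^2)"
    unfolding D_def z0_denom_def s_def by (simp add: algebra_simps)
  also have "(1 + s) * (n*(1 - rho^2) + rho^2) / ((1 + s) * D) = (n*(1 - rho^2) + rho^2) / D"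
    using s by simp
  finally show ?thesis unfolding D_def .
qed

lemma z0s_eq:
  assumes "0 < c" "0 < gam" "0 < nu"
  shows "z0s n \<sigma> c gam nu rho = - (sqrt n / \<sigma>) * rho * nu / z0_denom n c gam nu rho"
proof -
  have "A_const gam c nu * c * nu = (1 + gam*c*nu^2) / nu"
    using assms unfolding A_const_def by (simp add: field_simps power2_eq_square)
  moreover have "0 < 1 + gam*c*nu^2" using assms by (simp add: add_pos_pos)
  ultimately show ?thesis
    using assms unfolding z0s_def n_minus_eta[OF assms] by simp
qed

lemma z0_stationary:
  assumes "1 \<le> n" "0 < \<sigma>" "0 < c" "0 < gam" "0 < nu" "rho^2 < 1"
  shows "gam*nu^2 * z0o n c gam nu rho + gam*\<sigma>*rho*nu / sqrt n * z0s n \<sigma> c gam nu rho = 0"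
    and "z0d n c gam nu rho / c + gam*nu^2 * (z0d n c gam nu rho - z0o n c gam nu rho) = 1 / c"
    and "gam*\<sigma>^2 * z0s n \<sigma> c gam nu rho
      + gam*\<sigma>*rho*nu / sqrt n * (n * z0o n c gam nu rho + (z0d n c gam nu rho - z0o n c gam nu rho)) = 0"
proof -
  define D where "D = z0_denom n c gam nu rho"
  have D: "0 < D"
    unfolding D_def using z0_denom_pos assms by blast
  have n: "0 < sqrt n" "sqrt n * sqrt n = n"
    using assms by simp_all
  note closed_forms = z0o_eq[OF assms(3-5)] z0d_eq[OF assms(1,3-6)] z0s_eq[OF assms(3-5)]
  show "gam*nu^2 * z0o n c gam nu rho + gam*\<sigma>*rho*nu / sqrt n * z0s n \<sigma> c gam nu rho = 0"
    unfolding closed_forms D_def[symmetric] using D n assms by (simp add: field_simps power2_eq_square)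
  have "z0d n c gam nu rho / c + gam*nu^2 * (z0d n c gam nu rho - z0o n c gam nu rho)
      = ((n*(1 - rho^2) + rho^2) + gam*c*nu^2 * ((n*(1 - rho^2) + rho^2) - rho^2)) / (c * D)"
    unfolding closed_forms D_def[symmetric] using D assms by (simp add: field_simps)
  also have "(n*(1 - rho^2) + rho^2) + gam*c*nu^2 * ((n*(1 - rho^2) + rho^2) - rho^2) = D"
    unfolding D_def z0_denom_def by (simp add: algebra_simps)
  finally show "z0d n c gam nu rho / c + gam*nu^2 * (z0d n c gam nu rho - z0o n c gam nu rho) = 1 / c"
    using D by simp
  have "n * (rho^2 / D) + ((n*(1 - rho^2) + rho^2) / D - rho^2 / D) = n / D"
    using D by (simp add: field_simps)
  then show "gam*\<sigma>^2 * z0s n \<sigma> c gam nu rho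
      + gam*\<sigma>*rho*nu / sqrt n * (n * z0o n c gam nu rho + (z0d n c gam nu rho - z0o n c gam nu rho)) = 0"
    unfolding closed_forms D_def[symmetric] using D n assms by (simp add: field_simps power2_eq_square)
qed

section \<open>Comparative statics\<close>

lemma divide_quadratic_strict_mono:
  fixes L m x y :: real
  assumes "0 < L" "0 < m" "0 < x" "x < y" "y \<le> sqrt (m / L)"
  shows "x / (m + L*x^2) < y / (m + L*y^2)"
proof -
  have "y^2 \<le> (sqrt (m / L))^2"
    using assms by (intro power_mono) auto
  then have "L*y^2 \<le> m"
    using assms by (simp add: pos_le_divide_eq mult.commute)
  moreover have "L*x*y < L*y^2"
    using assms by (simp add: power2_eq_square)
  ultimately have "L*x*y < m"
    by linarith
  then have "0 < (y - x)*(m - L*x*y)"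
    using assms by (intro mult_pos_pos) auto
  also have "(y - x)*(m - L*x*y) = y*(m + L*x^2) - x*(m + L*y^2)"
    by (simp add: algebra_simps power2_eq_square)
  finally show ?thesis
    using assms by (simp add: field_simps add_pos_nonneg)
qed

lemma divide_quadratic_strict_antimono:
  fixes L m x y :: real
  assumes "0 < L" "0 < m" "sqrt (m / L) \<le> x" "x < y"
  shows "y / (m + L*y^2) < x / (m + L*x^2)"
proof -
  have "0 < x"
    using real_sqrt_gt_zero[OF divide_pos_pos[OF assms(2,1)]] assms(3) by linarith
  have "(sqrt (m / L))^2 \<le> x^2"
    using assms by (intro power_mono) auto
  then have "m \<le> L*x^2"
    using assms by (simp add: pos_divide_le_eq mult.commute)
  moreover have "L*x^2 < L*x*y"
    using assms \<open>0 < x\<close> by (simp add: power2_eq_square)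
  ultimately have "m < L*x*y"
    by linarith
  then have "0 < (y - x)*(L*x*y - m)"
    using assms by (intro mult_pos_pos) auto
  also have "(y - x)*(L*x*y - m) = x*(m + L*y^2) - y*(m + L*x^2)"
    by (simp add: algebra_simps power2_eq_square)
  finally show ?thesis
    using assms \<open>0 < x\<close> by (simp add: field_simps add_pos_nonneg)
qed

lemma z0_denom_eq_quadratic_nu:
  "z0_denom n c gam nu rho = (n*(1 - rho^2) + rho^2) + gam*c*n*(1 - rho^2) * nu^2"
  unfolding z0_denom_def by (simp add: algebra_simps)

lemma z0_denom_strict_mono_scale:
  assumes "1 \<le> n" "rho^2 < 1" "gam*c1*nu1^2 < gam*c2*nu2^2"
  shows "z0_denom n c1 gam nu1 rho < z0_denom n c2 gam nu2 rho"
proof -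
  have "gam*c1*nu1^2 * (n*(1 - rho^2)) < gam*c2*nu2^2 * (n*(1 - rho^2))"
    using assms by (intro mult_strict_right_mono) auto
  then show ?thesis
    unfolding z0_denom_def by (simp add: algebra_simps)
qed

lemma z0_denom_antimono_rho:
  assumes "1 \<le> n" "0 < c" "0 < gam" "r1^2 \<le> r2^2"
  shows "z0_denom n c gam nu r2 \<le> z0_denom n c gam nu r1"
proof -
  have "0 \<le> n*(gam*c*nu^2)"
    using assms by simp
  then have "1 \<le> n*(1 + gam*c*nu^2)"
    unfolding distrib_left mult_1_right using assms(1) by linarith
  then have "r1^2*(n*(1 + gam*c*nu^2) - 1) \<le> r2^2*(n*(1 + gam*c*nu^2) - 1)"
    using assms by (intro mult_right_mono) auto
  then show ?thesis
    unfolding z0_denom_def by (simp add: algebra_simps)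
qed

lemma abs_z0s_eq:
  assumes "1 \<le> n" "0 < \<sigma>" "0 < c" "0 < gam" "0 < nu" "rho^2 < 1"
  shows "\<bar>z0s n \<sigma> c gam nu rho\<bar> = sqrt n / \<sigma> * \<bar>rho\<bar> * (nu / z0_denom n c gam nu rho)"
  using assms z0_denom_pos[of n c gam rho nu]
  unfolding z0s_eq[OF assms(3-5)] by (simp add: abs_mult abs_divide)

lemma abs_z0s_strict_mono_rho:
  assumes "1 \<le> n" "0 < \<sigma>" "0 < c" "0 < gam" "0 < nu" "\<bar>r1\<bar> < \<bar>r2\<bar>" "\<bar>r2\<bar> < 1"
  shows "\<bar>z0s n \<sigma> c gam nu r1\<bar> < \<bar>z0s n \<sigma> c gam nu r2\<bar>"
proof -
  have r: "r1^2 < r2^2" "r2^2 < 1" "r1^2 < 1"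
    using assms(6,7) by (simp_all add: abs_square_less_1) (metis abs_le_square_iff not_le)+
  have "\<bar>r1\<bar> / z0_denom n c gam nu r1 < \<bar>r2\<bar> / z0_denom n c gam nu r2"
    using assms r z0_denom_pos z0_denom_antimono_rho[of n c gam r1 r2 nu]
    by (intro frac_less) auto
  then have "sqrt n / \<sigma> * nu * (\<bar>r1\<bar> / z0_denom n c gam nu r1)
      < sqrt n / \<sigma> * nu * (\<bar>r2\<bar> / z0_denom n c gam nu r2)"
    using assms by (intro mult_strict_left_mono) auto
  then show ?thesis
    unfolding abs_z0s_eq[OF assms(1-5) r(2)] abs_z0s_eq[OF assms(1-5) r(3)] by (simp add: mult_ac)
qed

lemma abs_z0s_antimono_c:
  assumes "1 \<le> n" "0 < \<sigma>" "0 < gam" "0 < nu" "rho^2 < 1" "0 < c1" "c1 < c2"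
  shows "\<bar>z0s n \<sigma> c2 gam nu rho\<bar> \<le> \<bar>z0s n \<sigma> c1 gam nu rho\<bar>
    \<and> (rho \<noteq> 0 \<longrightarrow> \<bar>z0s n \<sigma> c2 gam nu rho\<bar> < \<bar>z0s n \<sigma> c1 gam nu rho\<bar>)"
proof (cases "rho = 0")
  case True
  then show ?thesis by (simp add: z0s_def)
next
  case False
  have "0 < z0_denom n c1 gam nu rho" "z0_denom n c1 gam nu rho < z0_denom n c2 gam nu rho"
    using assms by (auto intro: z0_denom_pos z0_denom_strict_mono_scale)
  then have "nu / z0_denom n c2 gam nu rho < nu / z0_denom n c1 gam nu rho"
    using assms by (intro divide_strict_left_mono) auto
  then have "sqrt n / \<sigma> * \<bar>rho\<bar> * (nu / z0_denom n c2 gam nu rho)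
      < sqrt n / \<sigma> * \<bar>rho\<bar> * (nu / z0_denom n c1 gam nu rho)"
    using assms False by (intro mult_strict_left_mono) auto
  then show ?thesis
    using assms by (simp add: abs_z0s_eq)
qed

lemma abs_z0s_eq_quadratic_nu:
  assumes "1 \<le> n" "0 < \<sigma>" "0 < c" "0 < gam" "0 < nu" "rho^2 < 1"
  shows "\<bar>z0s n \<sigma> c gam nu rho\<bar> = sqrt n / \<sigma> * \<bar>rho\<bar>
    * (nu / ((n*(1 - rho^2) + rho^2) + gam*c*n*(1 - rho^2) * nu^2))"
  using abs_z0s_eq[OF assms] by (simp only: z0_denom_eq_quadratic_nu)

lemma abs_z0s_mono_nu_below_nu_dagger:
  assumes "1 \<le> n" "0 < \<sigma>" "0 < c" "0 < gam" "rho^2 < 1"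
    and "0 < v1" "v1 < v2" "v2 \<le> nu_dagger n c gam rho"
  shows "\<bar>z0s n \<sigma> c gam v1 rho\<bar> \<le> \<bar>z0s n \<sigma> c gam v2 rho\<bar>
    \<and> (rho \<noteq> 0 \<longrightarrow> \<bar>z0s n \<sigma> c gam v1 rho\<bar> < \<bar>z0s n \<sigma> c gam v2 rho\<bar>)"
proof (cases "rho = 0")
  case True
  then show ?thesis by (simp add: z0s_def)
next
  case False
  define m where "m = n*(1 - rho^2) + rho^2"
  define L where "L = gam*c*n*(1 - rho^2)"
  have "0 < m" "0 < L"
    using assms unfolding m_def L_def by (simp_all add: add_pos_nonneg)
  moreover have "v2 \<le> sqrt (m / L)"
    using assms(8) unfolding nu_dagger_def m_def L_def .
  ultimately have "v1 / (m + L * v1^2) < v2 / (m + L * v2^2)"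
    using assms by (intro divide_quadratic_strict_mono)
  then have "sqrt n / \<sigma> * \<bar>rho\<bar> * (v1 / (m + L * v1^2)) < sqrt n / \<sigma> * \<bar>rho\<bar> * (v2 / (m + L * v2^2))"
    using assms False by (intro mult_strict_left_mono) auto
  then show ?thesis
    using assms abs_z0s_eq_quadratic_nu unfolding m_def L_def by simp
qed

lemma abs_z0s_antimono_nu_above_nu_dagger:
  assumes "1 \<le> n" "0 < \<sigma>" "0 < c" "0 < gam" "rho^2 < 1"
    and "nu_dagger n c gam rho \<le> v1" "v1 < v2"
  shows "\<bar>z0s n \<sigma> c gam v2 rho\<bar> \<le> \<bar>z0s n \<sigma> c gam v1 rho\<bar>
    \<and> (rho \<noteq> 0 \<longrightarrow> \<bar>z0s n \<sigma> c gam v2 rho\<bar> < \<bar>z0s n \<sigma> c gam v1 rho\<bar>)"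
proof (cases "rho = 0")
  case True
  then show ?thesis by (simp add: z0s_def)
next
  case False
  define m where "m = n*(1 - rho^2) + rho^2"
  define L where "L = gam*c*n*(1 - rho^2)"
  have m: "0 < m" and L: "0 < L"
    using assms unfolding m_def L_def by (simp_all add: add_pos_nonneg)
  have v1: "sqrt (m / L) \<le> v1"
    using assms(6) unfolding nu_dagger_def m_def L_def .
  have "0 < v1"
    using real_sqrt_gt_zero[OF divide_pos_pos[OF m L]] v1 by linarith
  have "v2 / (m + L * v2^2) < v1 / (m + L * v1^2)"
    using L m v1 assms(7) by (rule divide_quadratic_strict_antimono)
  then have "sqrt n / \<sigma> * \<bar>rho\<bar> * (v2 / (m + L * v2^2)) < sqrt n / \<sigma> * \<bar>rho\<bar> * (v1 / (m + L * v1^2))"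
    using assms False by (intro mult_strict_left_mono) auto
  then show ?thesis
    using assms \<open>0 < v1\<close> abs_z0s_eq_quadratic_nu unfolding m_def L_def by simp
qed

lemma z0o_strict_mono_rho:
  assumes "1 \<le> n" "0 < c" "0 < gam" "0 < nu" "\<bar>r1\<bar> < \<bar>r2\<bar>" "\<bar>r2\<bar> < 1"
  shows "z0o n c gam nu r1 < z0o n c gam nu r2"
proof -
  have r: "r1^2 < r2^2" "r2^2 < 1"
    using assms(5,6) by (simp_all add: abs_square_less_1) (metis abs_le_square_iff not_le)
  then show ?thesis
    unfolding z0o_eq[OF assms(2-4)]
    using assms z0_denom_pos z0_denom_antimono_rho[of n c gam r1 r2 nu]
    by (intro frac_less) auto
qed

lemma z0o_antimono_scale:
  assumes "1 \<le> n" "0 < c1" "0 < c2" "0 < gam" "0 < v1" "0 < v2" "rho^2 < 1"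
    and "gam*c1* v1^2 < gam*c2* v2^2"
  shows "z0o n c2 gam v2 rho \<le> z0o n c1 gam v1 rho
    \<and> (rho \<noteq> 0 \<longrightarrow> z0o n c2 gam v2 rho < z0o n c1 gam v1 rho)"
proof -
  have "0 < z0_denom n c1 gam v1 rho" "z0_denom n c1 gam v1 rho < z0_denom n c2 gam v2 rho"
    using assms by (auto intro: z0_denom_pos z0_denom_strict_mono_scale)
  then show ?thesis
    unfolding z0o_eq[OF assms(2,4,5)] z0o_eq[OF assms(3,4,6)]
    by (auto intro: divide_left_mono divide_strict_left_mono)
qed

lemma z0o_antimono_c:
  assumes "1 \<le> n" "0 < gam" "0 < nu" "rho^2 < 1" "0 < c1" "c1 < c2"
  shows "z0o n c2 gam nu rho \<le> z0o n c1 gam nu rho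
    \<and> (rho \<noteq> 0 \<longrightarrow> z0o n c2 gam nu rho < z0o n c1 gam nu rho)"
  using assms by (intro z0o_antimono_scale) auto

lemma z0o_antimono_nu:
  assumes "1 \<le> n" "0 < c" "0 < gam" "rho^2 < 1" "0 < v1" "v1 < v2"
  shows "z0o n c gam v2 rho \<le> z0o n c gam v1 rho
    \<and> (rho \<noteq> 0 \<longrightarrow> z0o n c gam v2 rho < z0o n c gam v1 rho)"
  using assms by (intro z0o_antimono_scale) (auto intro: power_strict_mono)

lemma z0d_strict_mono_rho:
  assumes "1 \<le> n" "0 < c" "0 < gam" "0 < nu" "\<bar>r1\<bar> < \<bar>r2\<bar>" "\<bar>r2\<bar> < 1"
  shows "z0d n c gam nu r1 < z0d n c gam nu r2"
proof -
  have r: "r1^2 < r2^2" "r2^2 < 1" "r1^2 < 1"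
    using assms(5,6) by (simp_all add: abs_square_less_1) (metis abs_le_square_iff not_le)+
  define s where "s = gam*c*nu^2"
  define m1 where "m1 = n*(1 - r1^2) + r1^2"
  define m2 where "m2 = n*(1 - r2^2) + r2^2"
  have D1: "z0_denom n c gam nu r1 = m1 + s*n*(1 - r1^2)"
   and D2: "z0_denom n c gam nu r2 = m2 + s*n*(1 - r2^2)"
    unfolding z0_denom_def m1_def m2_def s_def by simp_all
  have "0 < m1 + s*n*(1 - r1^2)" "0 < m2 + s*n*(1 - r2^2)"
    unfolding D1[symmetric] D2[symmetric] using z0_denom_pos assms r by auto
  moreover have "m1*(m2 + s*n*(1 - r2^2)) < m2*(m1 + s*n*(1 - r1^2))"
  proof -
    have "0 < s*n*(r2^2 - r1^2)"
      using assms r unfolding s_def by simp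
    also have "s*n*(r2^2 - r1^2) = m2*(m1 + s*n*(1 - r1^2)) - m1*(m2 + s*n*(1 - r2^2))"
      unfolding m1_def m2_def by (simp add: algebra_simps)
    finally show ?thesis by simp
  qed
  ultimately have "m1 / (m1 + s*n*(1 - r1^2)) < m2 / (m2 + s*n*(1 - r2^2))"
    by (simp add: field_simps)
  then show ?thesis
    unfolding z0d_eq[OF assms(1-4) r(3)] z0d_eq[OF assms(1-4) r(2)] D1 D2 m1_def m2_def .
qed

lemma z0d_strict_antimono_scale:
  assumes "1 \<le> n" "0 < c1" "0 < c2" "0 < gam" "0 < v1" "0 < v2" "rho^2 < 1"
    and "gam*c1* v1^2 < gam*c2* v2^2"
  shows "z0d n c2 gam v2 rho < z0d n c1 gam v1 rho"
proof -
  have "0 < z0_denom n c1 gam v1 rho" "z0_denom n c1 gam v1 rho < z0_denom n c2 gam v2 rho"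
    using assms by (auto intro: z0_denom_pos z0_denom_strict_mono_scale)
  moreover have "0 < n*(1 - rho^2) + rho^2"
    using assms by (simp add: add_pos_nonneg)
  ultimately show ?thesis
    unfolding z0d_eq[OF assms(1,2,4,5,7)] z0d_eq[OF assms(1,3,4,6,7)]
    by (auto intro: divide_strict_left_mono)
qed

lemma z0d_strict_antimono_c:
  assumes "1 \<le> n" "0 < gam" "0 < nu" "rho^2 < 1" "0 < c1" "c1 < c2"
  shows "z0d n c2 gam nu rho < z0d n c1 gam nu rho"
  using assms by (intro z0d_strict_antimono_scale) auto

lemma z0d_strict_antimono_nu:
  assumes "1 \<le> n" "0 < c" "0 < gam" "rho^2 < 1" "0 < v1" "v1 < v2"
  shows "z0d n c gam v2 rho < z0d n c gam v1 rho"
  using assms by (intro z0d_strict_antimono_scale) (auto intro: power_strict_mono)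

section \<open>The maximiser without penalty\<close>

lemma sum_if_eq_mult:
  fixes f :: "'a::finite \<Rightarrow> real"
  shows "(\<Sum>j\<in>UNIV. (if i = j then a else b) * f j) = b * (\<Sum>j\<in>UNIV. f j) + (a - b) * f i"
proof -
  have "(\<Sum>j\<in>UNIV. (if i = j then a else b) * f j) = (\<Sum>j\<in>UNIV. b * f j + (if i = j then (a - b) * f j else 0))"
    by (rule sum.cong) (auto simp: algebra_simps)
  then show ?thesis
    by (simp add: sum.distrib sum_distrib_left)
qed

abbreviation fobj_sym :: "real \<Rightarrow> real \<Rightarrow> real \<Rightarrow> real \<Rightarrow> real \<Rightarrow> real
    \<Rightarrow> real^'n::finite^'n \<Rightarrow> real^'n \<Rightarrow> real" where
  "fobj_sym \<sigma> \<gamma>P c gam nu rho \<equiv> fobj \<sigma> \<gamma>P (\<lambda>_. c) (\<lambda>_. gam) (\<lambda>_. nu) (\<lambda>_. rho)"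

definition row_quadratic :: "real \<Rightarrow> real \<Rightarrow> real \<Rightarrow> real \<Rightarrow> real \<Rightarrow> 'n::finite \<Rightarrow> real^'n \<Rightarrow> real \<Rightarrow> real" where
  "row_quadratic \<sigma> c gam nu rho i x s = (x$i)^2 / (2*c) + gam*nu^2/2 * (\<Sum>j\<in>UNIV. (x$j)^2)
     + gam*\<sigma>^2/2 * s^2 + gam*\<sigma>*rho*nu / sqrt (real CARD('n)) * s * (\<Sum>j\<in>UNIV. x$j)"

definition row_polar :: "real \<Rightarrow> real \<Rightarrow> real \<Rightarrow> real \<Rightarrow> real \<Rightarrow> 'n::finite
    \<Rightarrow> real^'n \<Rightarrow> real \<Rightarrow> real^'n \<Rightarrow> real \<Rightarrow> real" where
  "row_polar \<sigma> c gam nu rho i x s w u = x$i * w$i / c + gam*nu^2 * (\<Sum>j\<in>UNIV. x$j * w$j)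
     + gam*\<sigma>^2 * s * u + gam*\<sigma>*rho*nu / sqrt (real CARD('n)) * (s * (\<Sum>j\<in>UNIV. w$j) + u * (\<Sum>j\<in>UNIV. x$j))"

definition row_objective :: "real \<Rightarrow> real \<Rightarrow> real \<Rightarrow> real \<Rightarrow> real \<Rightarrow> 'n::finite \<Rightarrow> real^'n \<Rightarrow> real \<Rightarrow> real" where
  "row_objective \<sigma> c gam nu rho i x s = row_quadratic \<sigma> c gam nu rho i x s - x$i / c"

definition penalty :: "real \<Rightarrow> real \<Rightarrow> real \<Rightarrow> real^'n::finite^'n \<Rightarrow> real^'n \<Rightarrow> real" where
  "penalty \<sigma> nu rho zQ zS = 1 / (2 * (real CARD('n))^2) * (\<Sum>i\<in>UNIV.
       (nu - nu * (\<Sum>j\<in>UNIV. zQ$j$i) - rho * \<sigma> / sqrt (real CARD('n)) * (\<Sum>j\<in>UNIV. zS$j))^2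
     + (1 - rho^2) * \<sigma>^2 / real CARD('n) * (\<Sum>j\<in>UNIV. zS$j)^2)"

lemma fobj_zero_eq_sum_row_objective:
  fixes zQ :: "real^'n::finite^'n"
  shows "fobj_sym \<sigma> 0 c gam nu rho zQ zS
     = - (1 / real CARD('n)) * (\<Sum>i\<in>UNIV. row_objective \<sigma> c gam nu rho i (zQ$i) (zS$i))"
proof -
  have "(zQ$i$i)^2 / (2*c) + gam/2 * (\<Sum>j\<in>UNIV. nu^2 * (zQ$i$j)^2) + gam*\<sigma>^2/2 * (zS$i)^2
      + gam*\<sigma> / sqrt (real CARD('n)) * zS$i * (\<Sum>j\<in>UNIV. rho * nu * zQ$i$j) - zQ$i$i / c
    = row_objective \<sigma> c gam nu rho i (zQ$i) (zS$i)" for i :: 'n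
    unfolding row_objective_def row_quadratic_def
    by (simp add: sum_distrib_left[symmetric] algebra_simps)
  then show ?thesis
    unfolding fobj_def Let_def by simp
qed

lemma fobj_eq_fobj_zero_minus_penalty:
  "fobj_sym \<sigma> \<gamma>P c gam nu rho zQ zS = fobj_sym \<sigma> 0 c gam nu rho zQ zS - \<gamma>P * penalty \<sigma> nu rho zQ zS"
  unfolding fobj_def penalty_def Let_def by simp

lemma penalty_nonneg: "rho^2 \<le> 1 \<Longrightarrow> 0 \<le> penalty \<sigma> nu rho zQ zS"
  unfolding penalty_def by (intro mult_nonneg_nonneg sum_nonneg add_nonneg_nonneg) auto

lemma row_quadratic_add:
  "row_quadratic \<sigma> c gam nu rho i (x + w) (s + u)
     = row_quadratic \<sigma> c gam nu rho i x s + row_quadratic \<sigma> c gam nu rho i w u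
       + row_polar \<sigma> c gam nu rho i x s w u"
proof -
  have "(\<Sum>j\<in>UNIV. ((x + w)$j)^2) = (\<Sum>j\<in>UNIV. (x$j)^2) + 2 * (\<Sum>j\<in>UNIV. x$j * w$j) + (\<Sum>j\<in>UNIV. (w$j)^2)"
    by (simp add: power2_sum sum.distrib sum_distrib_left mult.assoc)
  moreover have "(\<Sum>j\<in>UNIV. (x + w)$j) = (\<Sum>j\<in>UNIV. x$j) + (\<Sum>j\<in>UNIV. w$j)"
    by (simp add: sum.distrib)
  moreover have "((x + w)$i)^2 / (2*c) = (x$i)^2 / (2*c) + (w$i)^2 / (2*c) + x$i * w$i / c"
    by (simp add: power2_sum add_divide_distrib)
  ultimately show ?thesis
    unfolding row_quadratic_def row_polar_def by (simp add: algebra_simps power2_eq_square add_divide_distrib)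
qed

definition z0Q :: "real \<Rightarrow> real \<Rightarrow> real \<Rightarrow> real \<Rightarrow> real^'n::finite^'n" where
  "z0Q c gam nu rho =
     (\<chi> i j. if i = j then z0d (real CARD('n)) c gam nu rho else z0o (real CARD('n)) c gam nu rho)"

definition z0S :: "real \<Rightarrow> real \<Rightarrow> real \<Rightarrow> real \<Rightarrow> real \<Rightarrow> real^'n::finite" where
  "z0S \<sigma> c gam nu rho = (\<chi> i. z0s (real CARD('n)) \<sigma> c gam nu rho)"

text \<open>Stationarity of each row objective at the symmetric point: the polar form cancels the
  linear term - x$i / c of the row objective.\<close>

lemma row_polar_z0:
  fixes w :: "real^'n::finite"
  assumes "0 < \<sigma>" "0 < c" "0 < gam" "0 < nu" "rho^2 < 1"
  shows "row_polar \<sigma> c gam nu rho i (z0Q c gam nu rho $ i) (z0S \<sigma> c gam nu rho $ i) w u = w$i / c"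
proof -
  define N where "N = real CARD('n)"
  define zd zo zs where "zd = z0d N c gam nu rho" and "zo = z0o N c gam nu rho"
    and "zs = z0s N \<sigma> c gam nu rho"
  define k where "k = gam*\<sigma>*rho*nu / sqrt N"
  have "1 \<le> N" unfolding N_def by simp
  note stationary = z0_stationary[OF this assms, folded zd_def zo_def zs_def k_def]
  define x0 :: "real^'n" where "x0 = (\<chi> j. if i = j then zd else zo)"
  have row: "z0Q c gam nu rho $ i = x0"
    unfolding z0Q_def x0_def zd_def zo_def N_def by simp
  have sum_x0w: "(\<Sum>j\<in>UNIV. x0$j * w$j) = zo * (\<Sum>j\<in>UNIV. w$j) + (zd - zo) * w$i"
    unfolding x0_def by (simp add: sum_if_eq_mult)
  have sum_x0: "(\<Sum>j\<in>UNIV. x0$j) = N * zo + (zd - zo)"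
    using sum_if_eq_mult[of i zd zo "\<lambda>_. 1"] unfolding x0_def N_def by simp
  have "x0$i = zd"
    unfolding x0_def by simp
  then have "row_polar \<sigma> c gam nu rho i x0 zs w u
      = w$i * (zd / c + gam*nu^2 * (zd - zo)) + (\<Sum>j\<in>UNIV. w$j) * (gam*nu^2 * zo + k * zs)
        + u * (gam*\<sigma>^2 * zs + k * (N * zo + (zd - zo)))"
    unfolding row_polar_def N_def[symmetric] k_def[symmetric] sum_x0w sum_x0 by (simp add: algebra_simps)
  also have "\<dots> = w$i / c"
    using stationary by simp
  finally show ?thesis
    unfolding row z0S_def zs_def N_def by simp
qed

lemma row_objective_z0_add:
  fixes w :: "real^'n::finite"
  assumes "0 < \<sigma>" "0 < c" "0 < gam" "0 < nu" "rho^2 < 1"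
  shows "row_objective \<sigma> c gam nu rho i (z0Q c gam nu rho $ i + w) (z0S \<sigma> c gam nu rho $ i + u)
    = row_objective \<sigma> c gam nu rho i (z0Q c gam nu rho $ i) (z0S \<sigma> c gam nu rho $ i)
      + row_quadratic \<sigma> c gam nu rho i w u"
  unfolding row_objective_def row_quadratic_add row_polar_z0[OF assms]
  by (simp add: add_divide_distrib)

lemma fobj_zero_gap_eq_sum_row_quadratic:
  fixes zQ :: "real^'n::finite^'n"
  assumes "0 < \<sigma>" "0 < c" "0 < gam" "0 < nu" "rho^2 < 1"
  shows "fobj_sym \<sigma> 0 c gam nu rho (z0Q c gam nu rho :: real^'n^'n) (z0S \<sigma> c gam nu rho)
      - fobj_sym \<sigma> 0 c gam nu rho zQ zS
    = 1 / real CARD('n) * (\<Sum>i\<in>UNIV. row_quadratic \<sigma> c gam nu rho i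
        (zQ$i - z0Q c gam nu rho $ i) (zS$i - z0S \<sigma> c gam nu rho $ i))"
proof -
  have "row_objective \<sigma> c gam nu rho i (zQ$i) (zS$i)
    = row_objective \<sigma> c gam nu rho i (z0Q c gam nu rho $ i) (z0S \<sigma> c gam nu rho $ i)
      + row_quadratic \<sigma> c gam nu rho i (zQ$i - z0Q c gam nu rho $ i) (zS$i - z0S \<sigma> c gam nu rho $ i)"
    for i
    using row_objective_z0_add[OF assms, of i "zQ$i - z0Q c gam nu rho $ i" "zS$i - z0S \<sigma> c gam nu rho $ i"]
    by simp
  then show ?thesis
    unfolding fobj_zero_eq_sum_row_objective by (simp add: sum.distrib algebra_simps)
qed

lemma row_quadratic_ge:
  fixes w :: "real^'n::finite"
  assumes "0 \<le> c" "0 \<le> gam"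
  shows "(1 - \<bar>rho\<bar>) * gam/2 * (nu^2 * (\<Sum>j\<in>UNIV. (w$j)^2) + \<sigma>^2 * u^2)
    \<le> row_quadratic \<sigma> c gam nu rho i w u"
proof -
  define N where "N = real CARD('n)"
  define S1 where "S1 = (\<Sum>j\<in>UNIV. w$j)"
  define S2 where "S2 = (\<Sum>j\<in>UNIV. (w$j)^2)"
  define k where "k = gam*\<sigma>*rho*nu / sqrt N"
  define R where "R = \<bar>rho\<bar> * gam/2 * (nu^2 * S2 + \<sigma>^2 * u^2)"
  have N: "0 < N" and S2: "0 \<le> S2"
    unfolding N_def S2_def by (simp_all add: sum_nonneg)
  have R: "0 \<le> R"
    unfolding R_def using assms S2 by simp
  have cauchy_schwarz: "S1^2 \<le> N * S2"
    using Cauchy_Schwarz_ineq_sum[of "\<lambda>_. 1" "\<lambda>j. w$j" UNIV] unfolding S1_def S2_def N_def by simp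
  have am_gm: "4 * (nu^2 * S2) * (\<sigma>^2 * u^2) \<le> (nu^2 * S2 + \<sigma>^2 * u^2)^2"
    using sum_squares_ge_zero[of "nu^2 * S2 - \<sigma>^2 * u^2" 0] by (simp add: power2_eq_square algebra_simps)
  have "(k * u * S1)^2 = k^2 * u^2 * S1^2"
    by (simp add: power_mult_distrib)
  also have "\<dots> \<le> k^2 * u^2 * (N * S2)"
    using cauchy_schwarz by (intro mult_left_mono) auto
  also have "\<dots> = rho^2 * gam^2/4 * (4 * (nu^2 * S2) * (\<sigma>^2 * u^2))"
    unfolding k_def using N by (simp add: power_mult_distrib power_divide)
  also have "\<dots> \<le> rho^2 * gam^2/4 * (nu^2 * S2 + \<sigma>^2 * u^2)^2"
    using am_gm by (intro mult_left_mono) auto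
  also have "\<dots> = R^2"
    unfolding R_def by (simp add: power_mult_distrib power_divide)
  finally have "- R \<le> k * u * S1"
    using R abs_le_square_iff[of "k * u * S1" R] by (simp add: abs_le_iff)
  moreover have "row_quadratic \<sigma> c gam nu rho i w u
      = (w$i)^2 / (2*c) + gam/2 * (nu^2 * S2 + \<sigma>^2 * u^2) + k * u * S1"
    unfolding row_quadratic_def k_def S1_def S2_def N_def by (simp add: algebra_simps)
  moreover have "0 \<le> (w$i)^2 / (2*c)"
    using assms by simp
  moreover have "(1 - \<bar>rho\<bar>) * gam/2 * (nu^2 * S2 + \<sigma>^2 * u^2) = gam/2 * (nu^2 * S2 + \<sigma>^2 * u^2) - R"
    unfolding R_def by (simp add: field_simps)
  ultimately show ?thesis
    unfolding S2_def[symmetric] by linarith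
qed

lemma fobj_zero_gap_ge:
  fixes zQ :: "real^'n::finite^'n" and zS :: "real^'n"
  assumes "0 < \<sigma>" "0 < c" "0 < gam" "0 < nu" "\<bar>rho\<bar> < 1"
  defines "e \<equiv> (1 - \<bar>rho\<bar>) * gam/2 * min (nu^2) (\<sigma>^2) / real CARD('n)"
    and "gap \<equiv> fobj_sym \<sigma> 0 c gam nu rho (z0Q c gam nu rho :: real^'n^'n) (z0S \<sigma> c gam nu rho)
      - fobj_sym \<sigma> 0 c gam nu rho zQ zS"
  shows "e * (zQ$i$j - z0Q c gam nu rho $ i $ j)^2 \<le> gap"
    and "e * (zS$i - z0S \<sigma> c gam nu rho $ i)^2 \<le> gap"
proof -
  define w where "w k = zQ$k - z0Q c gam nu rho $ k" for k
  define u where "u k = zS$k - z0S \<sigma> c gam nu rho $ k" for k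
  define Q where "Q k = row_quadratic \<sigma> c gam nu rho k (w k) (u k)" for k
  define a where "a = (1 - \<bar>rho\<bar>) * gam/2"
  define N where "N = real CARD('n)"
  define S where "S = nu^2 * (\<Sum>j\<in>UNIV. (w i $ j)^2) + \<sigma>^2 * (u i)^2"
  have a: "0 < a" and N: "0 < N"
    unfolding a_def N_def using assms by simp_all
  have rho: "rho^2 < 1"
    using assms by (simp add: abs_square_less_1)
  have gap: "gap = (\<Sum>k\<in>UNIV. Q k) / N"
    unfolding gap_def fobj_zero_gap_eq_sum_row_quadratic[OF assms(1-4) rho] Q_def w_def u_def N_def by simp
  have Q_ge: "a * (nu^2 * (\<Sum>j\<in>UNIV. (w k $ j)^2) + \<sigma>^2 * (u k)^2) \<le> Q k" for k
    unfolding Q_def a_def using assms by (intro row_quadratic_ge) auto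
  have "0 \<le> a * (nu^2 * (\<Sum>j\<in>UNIV. (w k $ j)^2) + \<sigma>^2 * (u k)^2)" for k
    using a by (intro mult_nonneg_nonneg add_nonneg_nonneg sum_nonneg) auto
  then have "0 \<le> Q k" for k
    using Q_ge order_trans by blast
  then have "a * S \<le> (\<Sum>k\<in>UNIV. Q k)"
    using Q_ge[of i] member_le_sum[of i UNIV Q] unfolding S_def by simp
  then have a_S: "a * S / N \<le> gap"
    unfolding gap using N by (simp add: divide_right_mono)
  have "min (nu^2) (\<sigma>^2) * (w i $ j)^2 \<le> nu^2 * (\<Sum>j\<in>UNIV. (w i $ j)^2)"
    by (intro mult_mono member_le_sum) auto
  moreover have "min (nu^2) (\<sigma>^2) * (u i)^2 \<le> \<sigma>^2 * (u i)^2"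
    by (intro mult_right_mono) auto
  moreover have "0 \<le> nu^2 * (\<Sum>j\<in>UNIV. (w i $ j)^2)" "0 \<le> \<sigma>^2 * (u i)^2"
    by (simp_all add: sum_nonneg)
  ultimately have "min (nu^2) (\<sigma>^2) * (w i $ j)^2 \<le> S" and "min (nu^2) (\<sigma>^2) * (u i)^2 \<le> S"
    unfolding S_def by linarith+
  then have "e * (w i $ j)^2 \<le> a * S / N" and "e * (u i)^2 \<le> a * S / N"
    unfolding e_def a_def[symmetric] N_def[symmetric] using a N
    by (simp_all add: divide_right_mono mult.assoc mult_left_mono)
  with a_S show "e * (zQ$i$j - z0Q c gam nu rho $ i $ j)^2 \<le> gap"
    and "e * (zS$i - z0S \<sigma> c gam nu rho $ i)^2 \<le> gap"
    unfolding w_def u_def by simp_all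
qed

lemma is_maximiser_fobj_zero_iff:
  fixes zQ :: "real^'n::finite^'n" and zS :: "real^'n"
  assumes "0 < \<sigma>" "0 < c" "0 < gam" "0 < nu" "\<bar>rho\<bar> < 1"
  shows "is_maximiser (fobj_sym \<sigma> 0 c gam nu rho) zQ zS
    \<longleftrightarrow> zQ = z0Q c gam nu rho \<and> zS = z0S \<sigma> c gam nu rho"
proof -
  define e where "e = (1 - \<bar>rho\<bar>) * gam/2 * min (nu^2) (\<sigma>^2) / real CARD('n)"
  have e: "0 < e"
    unfolding e_def using assms by simp
  note gap_ge = fobj_zero_gap_ge[where 'n='n, OF assms, folded e_def]
  have "is_maximiser (fobj_sym \<sigma> 0 c gam nu rho) (z0Q c gam nu rho) (z0S \<sigma> c gam nu rho :: real^'n)"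
    unfolding is_maximiser_def
  proof (intro allI)
    fix wQ :: "real^'n^'n" and wS :: "real^'n"
    have "0 \<le> e * (wS$i - z0S \<sigma> c gam nu rho $ i)^2" for i
      using e by simp
    from order_trans[OF this gap_ge(2)[where zQ=wQ and zS=wS]]
    show "fobj_sym \<sigma> 0 c gam nu rho wQ wS
        \<le> fobj_sym \<sigma> 0 c gam nu rho (z0Q c gam nu rho :: real^'n^'n) (z0S \<sigma> c gam nu rho)"
      by simp
  qed
  moreover have "zQ = z0Q c gam nu rho \<and> zS = z0S \<sigma> c gam nu rho"
    if "is_maximiser (fobj_sym \<sigma> 0 c gam nu rho) zQ zS"
  proof -
    have gap: "fobj_sym \<sigma> 0 c gam nu rho (z0Q c gam nu rho :: real^'n^'n) (z0S \<sigma> c gam nu rho)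
        - fobj_sym \<sigma> 0 c gam nu rho zQ zS \<le> 0"
      using that unfolding is_maximiser_def by (simp add: le_diff_eq)
    have "e * (zQ$i$j - z0Q c gam nu rho $ i $ j)^2 \<le> 0" "e * (zS$i - z0S \<sigma> c gam nu rho $ i)^2 \<le> 0"
      for i j
      using gap_ge(1)[where zQ=zQ and zS=zS and i=i and j=j] gap_ge(2)[where zQ=zQ and zS=zS and i=i] gap
      by linarith+
    then show ?thesis
      using e by (simp add: vec_eq_iff mult_le_0_iff)
  qed
  ultimately show ?thesis
    by blast
qed

section \<open>Vanishing penalty\<close>

lemma tendsto_at_right_0_of_sq_le:
  fixes g :: "real \<Rightarrow> real"
  assumes "\<And>t. 0 < t \<Longrightarrow> (g t - L)^2 \<le> C * t"
  shows "(g \<longlongrightarrow> L) (at_right 0)"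
proof -
  have "((\<lambda>t. g t - L) \<longlongrightarrow> 0) (at_right 0)"
  proof (rule Lim_null_comparison)
    show "\<forall>\<^sub>F t in at_right 0. norm (g t - L) \<le> sqrt (C * t)"
      using eventually_at_right_less[of "0::real"]
    proof (rule eventually_mono)
      fix t :: real
      assume "0 < t"
      then show "norm (g t - L) \<le> sqrt (C * t)"
        using real_sqrt_le_mono[OF assms] by simp
    qed
    have "((\<lambda>t. sqrt (C * t)) \<longlongrightarrow> sqrt (C * 0)) (at_right 0)"
      by (intro tendsto_intros)
    then show "((\<lambda>t. sqrt (C * t)) \<longlongrightarrow> 0) (at_right 0)"
      by simp
  qed
  then show ?thesis
    by (rule LIM_zero_cancel)
qed

lemma penalised_maximisers_tendsto:
  fixes F P g :: "'a \<Rightarrow> real" and Z :: "real \<Rightarrow> 'a"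
  assumes "0 < e" and gap_ge: "\<And>z. e * (g z - g z0)^2 \<le> F z0 - F z"
    and P_nonneg: "\<And>z. 0 \<le> P z"
    and maximiser: "\<And>t z. 0 < t \<Longrightarrow> F z - t * P z \<le> F (Z t) - t * P (Z t)"
  shows "((\<lambda>t. g (Z t)) \<longlongrightarrow> g z0) (at_right 0)"
proof (rule tendsto_at_right_0_of_sq_le)
  fix t :: real
  assume "0 < t"
  then have "F z0 - F (Z t) \<le> t * P z0"
    using maximiser[of t z0] mult_nonneg_nonneg[OF less_imp_le[OF \<open>0 < t\<close>] P_nonneg[of "Z t"]]
    by linarith
  then have "e * (g (Z t) - g z0)^2 \<le> t * P z0"
    using gap_ge[of "Z t"] by linarith
  then show "(g (Z t) - g z0)^2 \<le> P z0 / e * t"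
    using \<open>0 < e\<close> by (simp add: field_simps)
qed

lemma fobj_maximisers_tendsto_z0:
  fixes Z :: "real \<Rightarrow> (real^'n::finite^'n) \<times> (real^'n)"
  assumes "0 < \<sigma>" "0 < c" "0 < gam" "0 < nu" "\<bar>rho\<bar> < 1"
    and maximiser: "\<forall>\<gamma>P>0. is_maximiser (fobj_sym \<sigma> \<gamma>P c gam nu rho) (fst (Z \<gamma>P)) (snd (Z \<gamma>P))"
  shows "((\<lambda>\<gamma>P. snd (Z \<gamma>P) $ i) \<longlongrightarrow> z0s (real CARD('n)) \<sigma> c gam nu rho) (at_right 0)"
    and "((\<lambda>\<gamma>P. fst (Z \<gamma>P) $ i $ i) \<longlongrightarrow> z0d (real CARD('n)) c gam nu rho) (at_right 0)"
    and "i \<noteq> j \<Longrightarrow> ((\<lambda>\<gamma>P. fst (Z \<gamma>P) $ i $ j) \<longlongrightarrow> z0o (real CARD('n)) c gam nu rho) (at_right 0)"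
proof -
  define e where "e = (1 - \<bar>rho\<bar>) * gam/2 * min (nu^2) (\<sigma>^2) / real CARD('n)"
  define F where "F p = fobj_sym \<sigma> 0 c gam nu rho (fst p) (snd p)" for p :: "(real^'n^'n) \<times> (real^'n)"
  define P where "P p = penalty \<sigma> nu rho (fst p) (snd p)" for p :: "(real^'n^'n) \<times> (real^'n)"
  define z0 where "z0 = (z0Q c gam nu rho :: real^'n^'n, z0S \<sigma> c gam nu rho :: real^'n)"
  have e: "0 < e"
    unfolding e_def using assms by simp
  have P: "0 \<le> P p" for p
    unfolding P_def using assms by (intro penalty_nonneg) (simp add: abs_square_le_1)
  have Z: "F p - t * P p \<le> F (Z t) - t * P (Z t)" if "0 < t" for t p
    using maximiser that unfolding F_def P_def is_maximiser_def fobj_eq_fobj_zero_minus_penalty[symmetric]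
    by blast
  note gap_ge = fobj_zero_gap_ge[where 'n='n, OF assms(1-5), folded e_def]
  have "e * (snd p $ i - snd z0 $ i)^2 \<le> F z0 - F p" for p
    using gap_ge(2) unfolding F_def z0_def by simp
  from penalised_maximisers_tendsto[OF e this P Z]
  show "((\<lambda>\<gamma>P. snd (Z \<gamma>P) $ i) \<longlongrightarrow> z0s (real CARD('n)) \<sigma> c gam nu rho) (at_right 0)"
    unfolding z0_def z0S_def by simp
  have tendsto_zQ: "((\<lambda>\<gamma>P. fst (Z \<gamma>P) $ k $ l) \<longlongrightarrow> z0Q c gam nu rho $ k $ l) (at_right 0)" for k l
  proof -
    have "e * (fst p $ k $ l - fst z0 $ k $ l)^2 \<le> F z0 - F p" for p
      using gap_ge(1) unfolding F_def z0_def by simp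
    from penalised_maximisers_tendsto[OF e this P Z]
    show ?thesis
      unfolding z0_def by simp
  qed
  show "((\<lambda>\<gamma>P. fst (Z \<gamma>P) $ i $ i) \<longlongrightarrow> z0d (real CARD('n)) c gam nu rho) (at_right 0)"
    using tendsto_zQ[of i i] unfolding z0_def z0Q_def by simp
  show "((\<lambda>\<gamma>P. fst (Z \<gamma>P) $ i $ j) \<longlongrightarrow> z0o (real CARD('n)) c gam nu rho) (at_right 0)"
    if "i \<noteq> j"
    using tendsto_zQ[of i j] that unfolding z0_def z0Q_def by simp
qed

theorem mainTheorem4:
  fixes \<sigma> c \<gamma> \<nu> \<rho> :: real
  assumes "\<sigma> > 0" and "c > 0" and "\<gamma> > 0" and "\<nu> > 0" and "-1 < \<rho>" and "\<rho> < 1"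
  shows
  "(\<exists>!p. is_maximiser (fobj \<sigma> 0 (\<lambda>_::'n::finite. c) (\<lambda>_. \<gamma>) (\<lambda>_. \<nu>) (\<lambda>_. \<rho>)) (fst p) (snd p))
   \<and> is_maximiser (fobj \<sigma> 0 (\<lambda>_::'n. c) (\<lambda>_. \<gamma>) (\<lambda>_. \<nu>) (\<lambda>_. \<rho>))
       (\<chi> i j. if i = j then z0d (real CARD('n)) c \<gamma> \<nu> \<rho> else z0o (real CARD('n)) c \<gamma> \<nu> \<rho>)
       (\<chi> i. z0s (real CARD('n)) \<sigma> c \<gamma> \<nu> \<rho>)
   \<and> (\<forall>Z :: real \<Rightarrow> (real^'n^'n) \<times> (real^'n).
        (\<forall>\<gamma>P > 0. is_maximiser (fobj \<sigma> \<gamma>P (\<lambda>_::'n. c) (\<lambda>_. \<gamma>) (\<lambda>_. \<nu>) (\<lambda>_. \<rho>))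
                     (fst (Z \<gamma>P)) (snd (Z \<gamma>P))) \<longrightarrow>
        (\<forall>i. ((\<lambda>\<gamma>P. snd (Z \<gamma>P) $ i) \<longlongrightarrow> z0s (real CARD('n)) \<sigma> c \<gamma> \<nu> \<rho>) (at_right 0))
      \<and> (\<forall>i. ((\<lambda>\<gamma>P. fst (Z \<gamma>P) $ i $ i) \<longlongrightarrow> z0d (real CARD('n)) c \<gamma> \<nu> \<rho>) (at_right 0))
      \<and> (\<forall>i j. i \<noteq> j \<longrightarrow>
           ((\<lambda>\<gamma>P. fst (Z \<gamma>P) $ i $ j) \<longlongrightarrow> z0o (real CARD('n)) c \<gamma> \<nu> \<rho>) (at_right 0)))
   \<and> 0 \<le> eta (real CARD('n)) \<gamma> c \<nu> \<rho> \<and> eta (real CARD('n)) \<gamma> c \<nu> \<rho> < real CARD('n)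
   \<comment> \<open>|z0s| increasing in |rho|, decreasing in c, unimodal in nu\<close>
   \<and> (\<forall>r1 r2. \<bar>r1\<bar> < \<bar>r2\<bar> \<and> \<bar>r2\<bar> < 1 \<longrightarrow>
        \<bar>z0s (real CARD('n)) \<sigma> c \<gamma> \<nu> r1\<bar> < \<bar>z0s (real CARD('n)) \<sigma> c \<gamma> \<nu> r2\<bar>)
   \<and> (\<forall>c1 c2. 0 < c1 \<and> c1 < c2 \<longrightarrow>
        \<bar>z0s (real CARD('n)) \<sigma> c2 \<gamma> \<nu> \<rho>\<bar> \<le> \<bar>z0s (real CARD('n)) \<sigma> c1 \<gamma> \<nu> \<rho>\<bar>
        \<and> (\<rho> \<noteq> 0 \<longrightarrow> \<bar>z0s (real CARD('n)) \<sigma> c2 \<gamma> \<nu> \<rho>\<bar> < \<bar>z0s (real CARD('n)) \<sigma> c1 \<gamma> \<nu> \<rho>\<bar>))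
   \<and> (\<forall>v1 v2. 0 < v1 \<and> v1 < v2 \<and> v2 \<le> nu_dagger (real CARD('n)) c \<gamma> \<rho> \<longrightarrow>
        \<bar>z0s (real CARD('n)) \<sigma> c \<gamma> v1 \<rho>\<bar> \<le> \<bar>z0s (real CARD('n)) \<sigma> c \<gamma> v2 \<rho>\<bar>
        \<and> (\<rho> \<noteq> 0 \<longrightarrow> \<bar>z0s (real CARD('n)) \<sigma> c \<gamma> v1 \<rho>\<bar> < \<bar>z0s (real CARD('n)) \<sigma> c \<gamma> v2 \<rho>\<bar>))
   \<and> (\<forall>v1 v2. nu_dagger (real CARD('n)) c \<gamma> \<rho> \<le> v1 \<and> v1 < v2 \<longrightarrow>
        \<bar>z0s (real CARD('n)) \<sigma> c \<gamma> v2 \<rho>\<bar> \<le> \<bar>z0s (real CARD('n)) \<sigma> c \<gamma> v1 \<rho>\<bar>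
        \<and> (\<rho> \<noteq> 0 \<longrightarrow> \<bar>z0s (real CARD('n)) \<sigma> c \<gamma> v2 \<rho>\<bar> < \<bar>z0s (real CARD('n)) \<sigma> c \<gamma> v1 \<rho>\<bar>))
   \<comment> \<open>z0o (n >= 2): increasing in |rho|, decreasing in c and nu\<close>
   \<and> (CARD('n) \<ge> 2 \<longrightarrow>
        (\<forall>r1 r2. \<bar>r1\<bar> < \<bar>r2\<bar> \<and> \<bar>r2\<bar> < 1 \<longrightarrow>
           z0o (real CARD('n)) c \<gamma> \<nu> r1 < z0o (real CARD('n)) c \<gamma> \<nu> r2)
      \<and> (\<forall>c1 c2. 0 < c1 \<and> c1 < c2 \<longrightarrow>
           z0o (real CARD('n)) c2 \<gamma> \<nu> \<rho> \<le> z0o (real CARD('n)) c1 \<gamma> \<nu> \<rho>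
           \<and> (\<rho> \<noteq> 0 \<longrightarrow> z0o (real CARD('n)) c2 \<gamma> \<nu> \<rho> < z0o (real CARD('n)) c1 \<gamma> \<nu> \<rho>))
      \<and> (\<forall>v1 v2. 0 < v1 \<and> v1 < v2 \<longrightarrow>
           z0o (real CARD('n)) c \<gamma> v2 \<rho> \<le> z0o (real CARD('n)) c \<gamma> v1 \<rho>
           \<and> (\<rho> \<noteq> 0 \<longrightarrow> z0o (real CARD('n)) c \<gamma> v2 \<rho> < z0o (real CARD('n)) c \<gamma> v1 \<rho>)))
   \<comment> \<open>z0d: increasing in |rho|, decreasing in c and nu\<close>
   \<and> (\<forall>r1 r2. \<bar>r1\<bar> < \<bar>r2\<bar> \<and> \<bar>r2\<bar> < 1 \<longrightarrow>
        z0d (real CARD('n)) c \<gamma> \<nu> r1 < z0d (real CARD('n)) c \<gamma> \<nu> r2)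
   \<and> (\<forall>c1 c2. 0 < c1 \<and> c1 < c2 \<longrightarrow>
        z0d (real CARD('n)) c2 \<gamma> \<nu> \<rho> < z0d (real CARD('n)) c1 \<gamma> \<nu> \<rho>)
   \<and> (\<forall>v1 v2. 0 < v1 \<and> v1 < v2 \<longrightarrow>
        z0d (real CARD('n)) c \<gamma> v2 \<rho> < z0d (real CARD('n)) c \<gamma> v1 \<rho>)"
proof -
  have n: "1 \<le> real CARD('n)"
    by simp
  have rho: "\<bar>\<rho>\<bar> < 1" "\<rho>^2 < 1"
    using assms by (simp_all add: abs_square_less_1)
  note params = assms(1-4) rho(1)
  have z0: "(\<chi> i j. if i = j then z0d (real CARD('n)) c \<gamma> \<nu> \<rho> else z0o (real CARD('n)) c \<gamma> \<nu> \<rho>)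
      = (z0Q c \<gamma> \<nu> \<rho> :: real^'n^'n)"
    "(\<chi> i. z0s (real CARD('n)) \<sigma> c \<gamma> \<nu> \<rho>) = (z0S \<sigma> c \<gamma> \<nu> \<rho> :: real^'n)"
    unfolding z0Q_def z0S_def by simp_all
  note maximiser_iff = is_maximiser_fobj_zero_iff[where 'n='n, OF params]
  have unique: "\<exists>!p. is_maximiser (fobj_sym \<sigma> 0 c \<gamma> \<nu> \<rho>) (fst p) (snd p :: real^'n)"
    by (rule ex1I[of _ "(z0Q c \<gamma> \<nu> \<rho>, z0S \<sigma> c \<gamma> \<nu> \<rho>)"]) (auto simp: maximiser_iff)
  note limits = fobj_maximisers_tendsto_z0[where 'n='n, OF params]
  show ?thesis
    unfolding z0 using unique maximiser_iff limits eta_bounds[OF n assms(2-4) rho(2)]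
      abs_z0s_strict_mono_rho[OF n assms(1-4)] abs_z0s_antimono_c[OF n assms(1,3,4) rho(2)]
      abs_z0s_mono_nu_below_nu_dagger[OF n assms(1-3) rho(2)]
      abs_z0s_antimono_nu_above_nu_dagger[OF n assms(1-3) rho(2)]
      z0o_strict_mono_rho[OF n assms(2-4)] z0o_antimono_c[OF n assms(3,4) rho(2)]
      z0o_antimono_nu[OF n assms(2,3) rho(2)]
      z0d_strict_mono_rho[OF n assms(2-4)] z0d_strict_antimono_c[OF n assms(3,4) rho(2)]
      z0d_strict_antimono_nu[OF n assms(2,3) rho(2)]
    by auto
qed

end
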